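(* Let $k$ be a field of characteristic zero, $n\ge1$, $S=k[x_1,\ldots,x_n]$, and $(S,L)$ a triangularizable Lie–Rinehart algebra with basis $\alpha_1,\ldots,\alpha_n$ and enveloping algebra $U$. The restriction of $d^0:U\to\mathcal{X}^1$, $d^0(u)=\sum_{k=1}^n[u,x_k]\hat x_k$, to $F_1U=S\oplus\bigoplus_{i=1}^nS\alpha_i$ has kernel $F_0U=S$.
   Context: Triangularizable: $L\subseteq\operatorname{Der}(S)$ an $S$-submodule and Lie subalgebra, free with basis of derivations $\alpha_1,\ldots,\alpha_n$ such that $\alpha_i(x_j)=0$ for $i>j$ and $\alpha_1(x_1)\cdots\alpha_n(x_n)\neq0$. $U$ is the universal enveloping algebra of $(S,L)$, with $[\alpha,s]=\alpha(s)$. $\mathcal{X}^1=U\otimes_k W^*$ where $W=\operatorname{span}_k(x_1,\ldots,x_n)$ and $\hat x_1,\ldots,\hat x_n$ is the dual basis. $F_pU$ is the $S$-span of the monomials $\alpha_n^{i_n}\cdots\alpha_1^{i_1}$ with $i_1+\cdots+i_n\le p$. *)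

theory Defs
  imports "HOL-Library.Poly_Mapping"
begin

(* Polynomials over 'k in countably many variables x_0, x_1, ...; a monomial is a
finitely supported exponent vector nat \<Rightarrow>0 nat.  The ring S = k[x_1..x_n]
is the subring of polynomials only involving the variables x_0..x_(n-1). *)

type_synonym 'k mpoly = "(nat \<Rightarrow>\<^sub>0 nat) \<Rightarrow>\<^sub>0 'k"

definition PVar :: "nat \<Rightarrow> 'k::comm_ring_1 mpoly" where
  "PVar i = Poly_Mapping.single (Poly_Mapping.single i 1) 1"

definition PConst :: "'k::comm_ring_1 \<Rightarrow> 'k mpoly" where
  "PConst c = Poly_Mapping.single 0 c"

definition PolyRing :: "nat \<Rightarrow> ('k::comm_ring_1) mpoly set" where
  "PolyRing n = {p. \<forall>m \<in> Poly_Mapping.keys p. \<forall>i \<in> Poly_Mapping.keys m. i < n}"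

(* k-linear derivations of S = PolyRing n, represented as maps that vanish outside S. *)
definition is_derivation :: "nat \<Rightarrow> ('k::comm_ring_1 mpoly \<Rightarrow> 'k mpoly) \<Rightarrow> bool" where
  "is_derivation n D \<longleftrightarrow>
     (\<forall>p \<in> PolyRing n. D p \<in> PolyRing n) \<and>
     (\<forall>p. p \<notin> PolyRing n \<longrightarrow> D p = 0) \<and>
     (\<forall>p \<in> PolyRing n. \<forall>q \<in> PolyRing n. D (p + q) = D p + D q) \<and>
     (\<forall>c. \<forall>p \<in> PolyRing n. D (PConst c * p) = PConst c * D p) \<and>
     (\<forall>p \<in> PolyRing n. \<forall>q \<in> PolyRing n. D (p * q) = p * D q + q * D p)"

definition der_smult :: "'k::comm_ring_1 mpoly \<Rightarrow> ('k mpoly \<Rightarrow> 'k mpoly) \<Rightarrow> ('k mpoly \<Rightarrow> 'k mpoly)" where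
  "der_smult s D = (\<lambda>p. s * D p)"

definition der_bracket :: "('k::comm_ring_1 mpoly \<Rightarrow> 'k mpoly) \<Rightarrow> ('k mpoly \<Rightarrow> 'k mpoly) \<Rightarrow> ('k mpoly \<Rightarrow> 'k mpoly)" where
  "der_bracket D E = (\<lambda>p. D (E p) - E (D p))"

definition triangularizable ::
  "nat \<Rightarrow> ('k::comm_ring_1 mpoly \<Rightarrow> 'k mpoly) set \<Rightarrow> (nat \<Rightarrow> ('k mpoly \<Rightarrow> 'k mpoly)) \<Rightarrow> bool" where
  "triangularizable n L \<alpha> \<longleftrightarrow>
     (\<forall>D \<in> L. is_derivation n D) \<and>
     (\<forall>D \<in> L. \<forall>E \<in> L. (\<lambda>p. D p + E p) \<in> L) \<and>
     (\<forall>s \<in> PolyRing n. \<forall>D \<in> L. der_smult s D \<in> L) \<and>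
     (\<forall>D \<in> L. \<forall>E \<in> L. der_bracket D E \<in> L) \<and>
     (\<forall>i < n. \<alpha> i \<in> L) \<and>
     (\<forall>D \<in> L. \<exists>!s. (\<forall>i < n. s i \<in> PolyRing n) \<and> (\<forall>i. i \<ge> n \<longrightarrow> s i = 0) \<and>
                    D = (\<lambda>p. \<Sum>i<n. s i * \<alpha> i p)) \<and>
     (\<forall>i < n. \<forall>j < n. i > j \<longrightarrow> \<alpha> i (PVar j) = 0) \<and>
     (\<Prod>i<n. \<alpha> i (PVar i)) \<noteq> 0"

(* The enveloping algebra U of (S,L), described through the structure maps
iota : S \<rightarrow> U (ring map) and j : L \<rightarrow> U, with [j alpha, iota s] = iota(alpha s),
j compatible with the S-module and Lie structure, and with
F_1 U = S \<oplus> (\<oplus>_i S alpha_i) (direct sum, free S-module). *)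
definition enveloping_data ::
  "nat \<Rightarrow> ('k::comm_ring_1 mpoly \<Rightarrow> 'k mpoly) set \<Rightarrow> (nat \<Rightarrow> ('k mpoly \<Rightarrow> 'k mpoly))
   \<Rightarrow> ('k mpoly \<Rightarrow> 'u::ring_1) \<Rightarrow> (('k mpoly \<Rightarrow> 'k mpoly) \<Rightarrow> 'u) \<Rightarrow> bool" where
  "enveloping_data n L \<alpha> \<iota> j \<longleftrightarrow>
     \<iota> 1 = 1 \<and>
     (\<forall>p \<in> PolyRing n. \<forall>q \<in> PolyRing n. \<iota> (p + q) = \<iota> p + \<iota> q \<and> \<iota> (p * q) = \<iota> p * \<iota> q) \<and>
     (\<forall>D \<in> L. \<forall>E \<in> L. j (\<lambda>p. D p + E p) = j D + j E) \<and>
     (\<forall>s \<in> PolyRing n. \<forall>D \<in> L. j (der_smult s D) = \<iota> s * j D) \<and>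
     (\<forall>D \<in> L. \<forall>E \<in> L. j (der_bracket D E) = j D * j E - j E * j D) \<and>
     (\<forall>D \<in> L. \<forall>s \<in> PolyRing n. j D * \<iota> s - \<iota> s * j D = \<iota> (D s)) \<and>
     (\<forall>s0 s. s0 \<in> PolyRing n \<longrightarrow> (\<forall>i<n. s i \<in> PolyRing n) \<longrightarrow>
        \<iota> s0 + (\<Sum>i<n. \<iota> (s i) * j (\<alpha> i)) = 0 \<longrightarrow> s0 = 0 \<and> (\<forall>i<n. s i = 0))"

definition F1U :: "nat \<Rightarrow> (nat \<Rightarrow> ('k::comm_ring_1 mpoly \<Rightarrow> 'k mpoly)) \<Rightarrow> ('k mpoly \<Rightarrow> 'u::ring_1)
   \<Rightarrow> (('k mpoly \<Rightarrow> 'k mpoly) \<Rightarrow> 'u) \<Rightarrow> 'u set" where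
  "F1U n \<alpha> \<iota> j = {\<iota> s0 + (\<Sum>i<n. \<iota> (s i) * j (\<alpha> i)) | s0 s.
      s0 \<in> PolyRing n \<and> (\<forall>i<n. s i \<in> PolyRing n)}"

definition F0U :: "nat \<Rightarrow> ('k::comm_ring_1 mpoly \<Rightarrow> 'u::ring_1) \<Rightarrow> 'u set" where
  "F0U n \<iota> = \<iota> ` PolyRing n"

(* X^1 = U \<otimes>_k W^* is identified with U^n via the dual basis hat x_0..hat x_(n-1):
an element is the function k \<mapsto> coefficient of hat x_k (zero for k \<ge> n).
d^0(u) = \<Sum>_k [u, x_k] hat x_k. *)
definition d0 :: "nat \<Rightarrow> ('k::comm_ring_1 mpoly \<Rightarrow> 'u::ring_1) \<Rightarrow> 'u \<Rightarrow> (nat \<Rightarrow> 'u)" where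
  "d0 n \<iota> u = (\<lambda>k. if k < n then u * \<iota> (PVar k) - \<iota> (PVar k) * u else 0)"

end

theory Submission
  imports Defs
begin

(* Write u = s0 + sum_i s_i alpha_i in F_1 U.  Since S is commutative, [u, x_k] = sum_i s_i alpha_i(x_k),
and S embeds into U, so d^0(u) = 0 says that (s_i) solves the homogeneous linear system with
matrix (alpha_i(x_k)).  This matrix is triangular with nonzero diagonal over the domain S, so
all s_i vanish and u = s0 lies in S. *)

lemma PolyRing_zero [simp]: "0 \<in> PolyRing n"
  by (simp add: PolyRing_def)

lemma PolyRing_PVar: "k < n \<Longrightarrow> PVar k \<in> PolyRing n"
  by (simp add: PolyRing_def PVar_def)

lemma PolyRing_add:
  assumes "p \<in> PolyRing n" "q \<in> PolyRing n"
  shows "p + q \<in> PolyRing n"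
  using assms keys_add[of p q] unfolding PolyRing_def by blast

lemma PolyRing_mult:
  assumes "p \<in> PolyRing n" "q \<in> PolyRing n"
  shows "p * q \<in> PolyRing n"
  unfolding PolyRing_def
proof (intro CollectI ballI)
  fix m i assume m: "m \<in> Poly_Mapping.keys (p * q)" and i: "i \<in> Poly_Mapping.keys m"
  obtain a b where ab: "m = a + b" "a \<in> Poly_Mapping.keys p" "b \<in> Poly_Mapping.keys q"
    using subsetD[OF keys_mult m] by blast
  have "i \<in> Poly_Mapping.keys a \<or> i \<in> Poly_Mapping.keys b"
    using subsetD[OF keys_add, of i a b] i ab(1) by simp
  then show "i < n"
    using assms ab(2,3) unfolding PolyRing_def by blast
qed

lemma PolyRing_sum:
  assumes "\<And>i. i \<in> I \<Longrightarrow> f i \<in> PolyRing n"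
  shows "(\<Sum>i\<in>I. f i) \<in> PolyRing n"
  using assms by (induction I rule: infinite_finite_induct) (auto simp: PolyRing_add)

lemma triangular_system_trivial_solution:
  fixes s :: "nat \<Rightarrow> 'a::semiring_no_zero_divisors" and a :: "nat \<Rightarrow> nat \<Rightarrow> 'a"
  assumes system: "\<And>k. k < n \<Longrightarrow> (\<Sum>i<n. s i * a i k) = 0"
    and triangular: "\<And>i k. k < i \<Longrightarrow> i < n \<Longrightarrow> a i k = 0"
    and diagonal: "\<And>k. k < n \<Longrightarrow> a k k \<noteq> 0"
  shows "k < n \<Longrightarrow> s k = 0"
proof (induction k rule: less_induct)
  case (less k)
  have "(\<Sum>i<n. s i * a i k) = s k * a k k + (\<Sum>i\<in>{..<n} - {k}. s i * a i k)"
    using less.prems by (intro sum.remove) auto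
  also have "(\<Sum>i\<in>{..<n} - {k}. s i * a i k) = 0"
  proof (rule sum.neutral, intro ballI)
    fix i assume "i \<in> {..<n} - {k}"
    then show "s i * a i k = 0"
      using less triangular[of k i] by (cases "i < k") auto
  qed
  finally have "s k * a k k = 0"
    using system less.prems by simp
  then show "s k = 0"
    using diagonal less.prems by simp
qed

locale triangular_envelope =
  fixes n :: nat
    and L :: "('k::idom mpoly \<Rightarrow> 'k mpoly) set"
    and \<alpha> :: "nat \<Rightarrow> ('k mpoly \<Rightarrow> 'k mpoly)"
    and \<iota> :: "'k mpoly \<Rightarrow> 'u::ring_1"
    and j :: "('k mpoly \<Rightarrow> 'k mpoly) \<Rightarrow> 'u"
  assumes triangularizable: "triangularizable n L \<alpha>"
    and enveloping: "enveloping_data n L \<alpha> \<iota> j"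
begin

lemma alpha_in_L: "i < n \<Longrightarrow> \<alpha> i \<in> L"
  using triangularizable by (simp add: triangularizable_def)

lemma alpha_PolyRing: "i < n \<Longrightarrow> p \<in> PolyRing n \<Longrightarrow> \<alpha> i p \<in> PolyRing n"
  using triangularizable alpha_in_L by (simp add: triangularizable_def is_derivation_def)

lemma alpha_PVar_triangular: "k < i \<Longrightarrow> i < n \<Longrightarrow> \<alpha> i (PVar k) = 0"
  using triangularizable by (simp add: triangularizable_def)

lemma alpha_PVar_diagonal: "k < n \<Longrightarrow> \<alpha> k (PVar k) \<noteq> 0"
  using triangularizable by (auto simp: triangularizable_def)

lemma iota_add: "p \<in> PolyRing n \<Longrightarrow> q \<in> PolyRing n \<Longrightarrow> \<iota> (p + q) = \<iota> p + \<iota> q"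
  using enveloping by (simp add: enveloping_data_def)

lemma iota_mult: "p \<in> PolyRing n \<Longrightarrow> q \<in> PolyRing n \<Longrightarrow> \<iota> (p * q) = \<iota> p * \<iota> q"
  using enveloping by (simp add: enveloping_data_def)

lemma iota_zero [simp]: "\<iota> 0 = 0"
  using iota_add[of 0 0] by simp

lemma iota_commute:
  assumes "p \<in> PolyRing n" "q \<in> PolyRing n"
  shows "\<iota> p * \<iota> q = \<iota> q * \<iota> p"
  using iota_mult[OF assms] iota_mult[OF assms(2,1)] by (simp add: mult.commute)

lemma iota_sum:
  assumes "\<And>i. i \<in> I \<Longrightarrow> f i \<in> PolyRing n"
  shows "\<iota> (\<Sum>i\<in>I. f i) = (\<Sum>i\<in>I. \<iota> (f i))"
  using assms by (induction I rule: infinite_finite_induct) (auto simp: iota_add PolyRing_sum)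

lemma iota_basis_independent:
  assumes "s0 \<in> PolyRing n" "\<And>i. i < n \<Longrightarrow> s i \<in> PolyRing n"
    and "\<iota> s0 + (\<Sum>i<n. \<iota> (s i) * j (\<alpha> i)) = 0"
  shows "s0 = 0"
  using enveloping assms unfolding enveloping_data_def by blast

lemma iota_eq_zero_iff: "p \<in> PolyRing n \<Longrightarrow> \<iota> p = 0 \<longleftrightarrow> p = 0"
  using iota_basis_independent[of p "\<lambda>_. 0"] by auto

lemma commutator_j_alpha_iota:
  "i < n \<Longrightarrow> s \<in> PolyRing n \<Longrightarrow> j (\<alpha> i) * \<iota> s - \<iota> s * j (\<alpha> i) = \<iota> (\<alpha> i s)"
  using enveloping alpha_in_L by (simp add: enveloping_data_def)

lemma commutator_F1U_PVar:
  assumes s0: "s0 \<in> PolyRing n" and s: "\<And>i. i < n \<Longrightarrow> s i \<in> PolyRing n" and k: "k < n"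
  shows "(\<iota> s0 + (\<Sum>i<n. \<iota> (s i) * j (\<alpha> i))) * \<iota> (PVar k)
           - \<iota> (PVar k) * (\<iota> s0 + (\<Sum>i<n. \<iota> (s i) * j (\<alpha> i)))
         = \<iota> (\<Sum>i<n. s i * \<alpha> i (PVar k))"
proof -
  have xk: "PVar k \<in> PolyRing n"
    using k by (rule PolyRing_PVar)
  have summand: "\<iota> (s i) * j (\<alpha> i) * \<iota> (PVar k) - \<iota> (PVar k) * (\<iota> (s i) * j (\<alpha> i))
      = \<iota> (s i * \<alpha> i (PVar k))" if i: "i < n" for i
  proof -
    have "\<iota> (s i) * j (\<alpha> i) * \<iota> (PVar k) - \<iota> (PVar k) * (\<iota> (s i) * j (\<alpha> i))
        = \<iota> (s i) * (j (\<alpha> i) * \<iota> (PVar k) - \<iota> (PVar k) * j (\<alpha> i))"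
      using iota_commute[OF xk s[OF i]] by (simp add: algebra_simps flip: mult.assoc)
    also have "\<dots> = \<iota> (s i * \<alpha> i (PVar k))"
      using commutator_j_alpha_iota[OF i xk] iota_mult[OF s[OF i] alpha_PolyRing[OF i xk]] by simp
    finally show ?thesis .
  qed
  have "(\<iota> s0 + (\<Sum>i<n. \<iota> (s i) * j (\<alpha> i))) * \<iota> (PVar k)
          - \<iota> (PVar k) * (\<iota> s0 + (\<Sum>i<n. \<iota> (s i) * j (\<alpha> i)))
        = (\<iota> s0 * \<iota> (PVar k) - \<iota> (PVar k) * \<iota> s0)
          + (\<Sum>i<n. \<iota> (s i) * j (\<alpha> i) * \<iota> (PVar k) - \<iota> (PVar k) * (\<iota> (s i) * j (\<alpha> i)))"
    by (simp add: algebra_simps sum_distrib_left sum_distrib_right sum_subtractf)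
  also have "\<dots> = (\<Sum>i<n. \<iota> (s i * \<alpha> i (PVar k)))"
    using iota_commute[OF s0 xk] summand by simp
  also have "\<dots> = \<iota> (\<Sum>i<n. s i * \<alpha> i (PVar k))"
    by (rule iota_sum[symmetric]) (simp add: PolyRing_mult s alpha_PolyRing xk)
  finally show ?thesis .
qed

lemma d0_iota: "s0 \<in> PolyRing n \<Longrightarrow> d0 n \<iota> (\<iota> s0) = (\<lambda>k. 0)"
  by (auto simp: d0_def iota_commute PolyRing_PVar)

lemma F0U_subset_F1U: "F0U n \<iota> \<subseteq> F1U n \<alpha> \<iota> j"
  unfolding F0U_def F1U_def by (force intro: exI[of _ "\<lambda>_. 0"])

lemma ker_d0_F1U_subset_F0U:
  assumes "u \<in> F1U n \<alpha> \<iota> j" and d0_u: "d0 n \<iota> u = (\<lambda>k. 0)"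
  shows "u \<in> F0U n \<iota>"
proof -
  obtain s0 s where u: "u = \<iota> s0 + (\<Sum>i<n. \<iota> (s i) * j (\<alpha> i))"
    and s0: "s0 \<in> PolyRing n" and s: "\<And>i. i < n \<Longrightarrow> s i \<in> PolyRing n"
    using assms(1) unfolding F1U_def by blast
  have system: "(\<Sum>i<n. s i * \<alpha> i (PVar k)) = 0" if k: "k < n" for k
  proof -
    have "\<iota> (\<Sum>i<n. s i * \<alpha> i (PVar k)) = 0"
      using fun_cong[OF d0_u, of k] commutator_F1U_PVar[OF s0 s k] k by (simp add: d0_def u)
    moreover have "(\<Sum>i<n. s i * \<alpha> i (PVar k)) \<in> PolyRing n"
      by (rule PolyRing_sum) (simp add: PolyRing_mult s alpha_PolyRing PolyRing_PVar k)
    ultimately show ?thesis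
      using iota_eq_zero_iff by blast
  qed
  have "s i = 0" if "i < n" for i
    using triangular_system_trivial_solution[of n s "\<lambda>i k. \<alpha> i (PVar k)", OF system
        alpha_PVar_triangular alpha_PVar_diagonal that] .
  then have "u = \<iota> s0"
    by (simp add: u)
  then show ?thesis
    using s0 by (simp add: F0U_def)
qed

theorem ker_d0_F1U: "{u \<in> F1U n \<alpha> \<iota> j. d0 n \<iota> u = (\<lambda>k. 0)} = F0U n \<iota>"
proof
  show "{u \<in> F1U n \<alpha> \<iota> j. d0 n \<iota> u = (\<lambda>k. 0)} \<subseteq> F0U n \<iota>"
    using ker_d0_F1U_subset_F0U by blast
  have "d0 n \<iota> u = (\<lambda>k. 0)" if "u \<in> F0U n \<iota>" for u
    using that d0_iota unfolding F0U_def by blast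
  then show "F0U n \<iota> \<subseteq> {u \<in> F1U n \<alpha> \<iota> j. d0 n \<iota> u = (\<lambda>k. 0)}"
    using F0U_subset_F1U by blast
qed

end

theorem lemma3p1:
  fixes n :: nat
    and L :: "('k::field_char_0 mpoly \<Rightarrow> 'k mpoly) set"
    and \<alpha> :: "nat \<Rightarrow> ('k mpoly \<Rightarrow> 'k mpoly)"
    and \<iota> :: "'k mpoly \<Rightarrow> 'u::ring_1"
    and j :: "('k mpoly \<Rightarrow> 'k mpoly) \<Rightarrow> 'u"
  assumes "n \<ge> 1"
    and "triangularizable n L \<alpha>"
    and "enveloping_data n L \<alpha> \<iota> j"
  shows "{u \<in> F1U n \<alpha> \<iota> j. d0 n \<iota> u = (\<lambda>k. 0)} = F0U n \<iota>"
proof -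
  interpret triangular_envelope n L \<alpha> \<iota> j
    using assms(2,3) by unfold_locales
  show ?thesis
    by (rule ker_d0_F1U)
qed

end
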